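(* Let $n\ge 1$ and let $\epsilon_0,\epsilon_1,\ldots,\epsilon_n$ be real numbers with $0<\epsilon_i\le 1$ for $i=0,1,\ldots,n$. Then for every symmetric pseudo-Boolean function $f:\{0,1\}^n\to\mathbb{R}$ there exists a unique vector $(\alpha_0,\alpha_1,\ldots,\alpha_n)\in\mathbb{R}^{n+1}$ such that \[ f(x)=\sum_{i=0}^{n}\alpha_i\,\min\Bigl(0,\; i-\epsilon_i-\sum_{r=1}^n x_r\Bigr)\quad\text{for all }x\in\{0,1\}^n. \]
   Context: A pseudo-Boolean function is a map $f:\{0,1\}^n\to\mathbb{R}$. It is symmetric if its value depends only on the Hamming weight $|x|=\sum_{j=1}^n x_j$ of $x$, i.e. there is $k:\{0,1,\ldots,n\}\to\mathbb{R}$ with $f(x)=k(|x|)$ for all $x$. *)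

theory Defs
  imports Complex_Main
begin

text \<open>The Boolean cube {0,1}^n, with points represented as functions on the
index set {1..n} (extended by 0 outside, so that each point has a unique representation).\<close>
definition bool_cube :: "nat \<Rightarrow> (nat \<Rightarrow> real) set" where
  "bool_cube n = {x. (\<forall>j\<in>{1..n}. x j \<in> {0, 1}) \<and> (\<forall>j. j \<notin> {1..n} \<longrightarrow> x j = 0)}"

definition hweight :: "nat \<Rightarrow> (nat \<Rightarrow> real) \<Rightarrow> real" where
  "hweight n x = (\<Sum>r=1..n. x r)"

definition symmetric_pbf :: "nat \<Rightarrow> ((nat \<Rightarrow> real) \<Rightarrow> real) \<Rightarrow> bool" where
  "symmetric_pbf n f \<longleftrightarrow>
     (\<exists>k :: real \<Rightarrow> real. \<forall>x\<in>bool_cube n. f x = k (hweight n x))"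

end

theory Submission
  imports Defs
begin

text \<open>
  On the cube, the Hamming weight of a point takes exactly the values
  0, 1, ..., n, so an identity between two functions of the weight holds on the whole
  cube iff it holds at these n+1 weights.  Writing f x = k |x|, the representation of
  f is therefore the linear system
     \<Sum>i=0..n. \<alpha> i * M w i = k w   (w = 0..n),   M w i = min 0 (i - \<epsilon> i - w).
  Because 0 < \<epsilon> i \<le> 1, the entry M w i vanishes for i > w and M w w = -\<epsilon> w \<noteq> 0:
  the matrix is lower triangular with nonzero diagonal, so the system has exactly one
  solution, obtained by forward substitution.
\<close>

function forward_subst :: "(nat \<Rightarrow> nat \<Rightarrow> 'a::field) \<Rightarrow> (nat \<Rightarrow> 'a) \<Rightarrow> nat \<Rightarrow> 'a" where
  "forward_subst M K w = (K w - (\<Sum>i<w. forward_subst M K i * M w i)) / M w w"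
  by auto
termination by (relation "measure (\<lambda>(M, K, w). w)") auto

declare forward_subst.simps [simp del]

lemma lower_triangular_row_sum:
  fixes M :: "nat \<Rightarrow> nat \<Rightarrow> 'a::field"
  assumes upper_zero: "\<And>i. w < i \<Longrightarrow> i \<le> n \<Longrightarrow> M w i = 0" and "w \<le> n"
  shows "(\<Sum>i=0..n. a i * M w i) = (\<Sum>i<w. a i * M w i) + a w * M w w"
proof -
  have "(\<Sum>i=0..n. a i * M w i) = (\<Sum>i\<in>{0..n}. if i \<in> {..w} then a i * M w i else 0)"
    by (rule sum.cong) (auto simp: upper_zero)
  also have "\<dots> = (\<Sum>i\<in>{0..n} \<inter> {..w}. a i * M w i)"
    by (rule sum.inter_restrict [symmetric]) simp
  also have "\<dots> = (\<Sum>i\<le>w. a i * M w i)"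
    using \<open>w \<le> n\<close> by (intro sum.cong) auto
  also have "\<dots> = (\<Sum>i<w. a i * M w i) + a w * M w w"
    by (simp add: lessThan_Suc_atMost [symmetric])
  finally show ?thesis .
qed

lemma lower_triangular_unique_solution:
  fixes M :: "nat \<Rightarrow> nat \<Rightarrow> 'a::field" and K :: "nat \<Rightarrow> 'a"
  assumes upper_zero: "\<And>w i. w < i \<Longrightarrow> i \<le> n \<Longrightarrow> M w i = 0"
    and diag: "\<And>w. w \<le> n \<Longrightarrow> M w w \<noteq> 0"
  shows "\<exists>!a. (\<forall>i. i > n \<longrightarrow> a i = 0) \<and> (\<forall>w\<le>n. (\<Sum>i=0..n. a i * M w i) = K w)"
proof (rule ex1I)
  define sol where "sol i = (if i \<le> n then forward_subst M K i else 0)" for i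
  have row: "(\<Sum>i=0..n. a i * M w i) = (\<Sum>i<w. a i * M w i) + a w * M w w"
    if "w \<le> n" for a w
    using lower_triangular_row_sum[OF upper_zero that] .
  have sol_outside: "\<forall>i. i > n \<longrightarrow> sol i = 0"
    by (simp add: sol_def)
  have sol_solves: "\<forall>w\<le>n. (\<Sum>i=0..n. sol i * M w i) = K w"
  proof (intro allI impI)
    fix w assume w: "w \<le> n"
    have below: "(\<Sum>i<w. sol i * M w i) = (\<Sum>i<w. forward_subst M K i * M w i)"
      using w by (intro sum.cong) (auto simp: sol_def)
    have "sol w = (K w - (\<Sum>i<w. sol i * M w i)) / M w w"
      using w by (simp add: sol_def below forward_subst.simps [of _ _ w])
    then show "(\<Sum>i=0..n. sol i * M w i) = K w"
      using row[OF w] diag[OF w] by simp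
  qed
  show "(\<forall>i. i > n \<longrightarrow> sol i = 0) \<and> (\<forall>w\<le>n. (\<Sum>i=0..n. sol i * M w i) = K w)"
    using sol_outside sol_solves by blast
  fix a assume a: "(\<forall>i. i > n \<longrightarrow> a i = 0) \<and> (\<forall>w\<le>n. (\<Sum>i=0..n. a i * M w i) = K w)"
  have "a w = sol w" for w
  proof (induction w rule: less_induct)
    case (less w)
    show ?case
    proof (cases "w \<le> n")
      case True
      have "(\<Sum>i<w. a i * M w i) = (\<Sum>i<w. sol i * M w i)"
        using less by (intro sum.cong) auto
      moreover have "(\<Sum>i=0..n. a i * M w i) = (\<Sum>i=0..n. sol i * M w i)"
        using a sol_solves True by simp
      ultimately have "a w * M w w = sol w * M w w"
        using row[OF True, of a] row[OF True, of sol] by simp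
      then show ?thesis using diag[OF True] by simp
    qed (use a in \<open>simp add: sol_def\<close>)
  qed
  then show "a = sol" by blast
qed

definition unit_prefix :: "nat \<Rightarrow> nat \<Rightarrow> real" where
  "unit_prefix w j = (if 1 \<le> j \<and> j \<le> w then 1 else 0)"

lemma unit_prefix_in_cube: "w \<le> n \<Longrightarrow> unit_prefix w \<in> bool_cube n"
  by (auto simp: bool_cube_def unit_prefix_def)

lemma hweight_unit_prefix:
  assumes "w \<le> n"
  shows "hweight n (unit_prefix w) = real w"
proof -
  have "hweight n (unit_prefix w) = (\<Sum>r\<in>{1..n}. if r \<in> {1..w} then 1 else 0)"
    unfolding hweight_def by (intro sum.cong) (auto simp: unit_prefix_def)
  also have "\<dots> = (\<Sum>r\<in>{1..n} \<inter> {1..w}. 1)"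
    by (rule sum.inter_restrict [symmetric]) simp
  also have "\<dots> = real w"
    using assms by (simp add: Int_absorb1)
  finally show ?thesis .
qed

lemma hweight_in_cube:
  assumes "x \<in> bool_cube n"
  shows "\<exists>w\<le>n. hweight n x = real w"
proof -
  let ?ones = "{1..n} \<inter> {r. x r = 1}"
  have "hweight n x = (\<Sum>r\<in>{1..n}. if r \<in> {r. x r = 1} then 1 else 0)"
    unfolding hweight_def using assms by (intro sum.cong) (auto simp: bool_cube_def)
  also have "\<dots> = real (card ?ones)"
    by (simp add: sum.If_cases)
  finally have "hweight n x = real (card ?ones)" .
  moreover have "card ?ones \<le> n"
    using card_mono[of "{1..n}" ?ones] by auto
  ultimately show ?thesis by blast
qed

lemma weight_identity_on_cube:
  fixes g h :: "real \<Rightarrow> real"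
  shows "(\<forall>x\<in>bool_cube n. g (hweight n x) = h (hweight n x)) \<longleftrightarrow>
         (\<forall>w\<le>n. g (real w) = h (real w))"
  using hweight_in_cube unit_prefix_in_cube hweight_unit_prefix by metis

definition kink :: "(nat \<Rightarrow> real) \<Rightarrow> nat \<Rightarrow> nat \<Rightarrow> real" where
  "kink \<epsilon> w i = min 0 (real i - \<epsilon> i - real w)"

text \<open>For i > w the kink is still flat at w, since \<epsilon> i \<le> 1 \<le> i - w.\<close>
lemma kink_above_diagonal:
  assumes "w < i" "\<epsilon> i \<le> 1"
  shows "kink \<epsilon> w i = 0"
  using assms unfolding kink_def by (simp add: min_def)

lemma kink_diagonal:
  assumes "0 < \<epsilon> w"
  shows "kink \<epsilon> w w \<noteq> 0"
  using assms unfolding kink_def by simp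

theorem theorem1:
  fixes n :: nat and \<epsilon> :: "nat \<Rightarrow> real" and f :: "(nat \<Rightarrow> real) \<Rightarrow> real"
  assumes "n \<ge> 1"
    and "\<forall>i\<in>{0..n}. 0 < \<epsilon> i \<and> \<epsilon> i \<le> 1"
    and "symmetric_pbf n f"
  shows "\<exists>!\<alpha> :: nat \<Rightarrow> real. (\<forall>i. i > n \<longrightarrow> \<alpha> i = 0) \<and>
           (\<forall>x\<in>bool_cube n. f x = (\<Sum>i=0..n. \<alpha> i * min 0 (real i - \<epsilon> i - (\<Sum>r=1..n. x r))))"
proof -
  obtain k where k: "\<forall>x\<in>bool_cube n. f x = k (hweight n x)"
    using assms(3) unfolding symmetric_pbf_def by blast
  have system: "(\<forall>x\<in>bool_cube n. f x = (\<Sum>i=0..n. \<alpha> i * min 0 (real i - \<epsilon> i - (\<Sum>r=1..n. x r))))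
      \<longleftrightarrow> (\<forall>w\<le>n. (\<Sum>i=0..n. \<alpha> i * kink \<epsilon> w i) = k (real w))" for \<alpha>
    using weight_identity_on_cube[of n "\<lambda>t. k t" "\<lambda>t. \<Sum>i=0..n. \<alpha> i * min 0 (real i - \<epsilon> i - t)"] k
    by (auto simp: hweight_def kink_def)
  have "\<exists>!\<alpha>. (\<forall>i. i > n \<longrightarrow> \<alpha> i = 0) \<and>
          (\<forall>w\<le>n. (\<Sum>i=0..n. \<alpha> i * kink \<epsilon> w i) = k (real w))"
    using assms(2) kink_above_diagonal kink_diagonal
    by (intro lower_triangular_unique_solution) auto
  then show ?thesis
    unfolding system .
qed

end
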